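(* For every prime power $q$, the function $n\mapsto\varrho(n,q)$ (for integers $n\ge1$) is increasing, where $$\varrho(n,q):=\frac{f(n,q)}{\binom{n+1}{2}_q}.$$
   Context: $f(n,q)$ is the smallest size of a set of lines of $\mathrm{PG}(n,q)$ (the $n$-dimensional projective space over $\mathbb F_q$) such that every plane contains one of them ($f(1,q)=0$). $\binom{n+1}{2}_q=\frac{(q^{n+1}-1)(q^n-1)}{(q^2-1)(q-1)}$ is the number of lines of $\mathrm{PG}(n,q)$. *)

theory Defs
  imports Complex_Main "HOL-Library.Function_Algebras"
begin

text \<open>Vectors of F^(n+1), coordinates indexed by 0..n, as functions nat => F vanishing beyond n.\<close>
definition pvec :: "nat \<Rightarrow> (nat \<Rightarrow> 'a::field) set" where
  "pvec n = {v. \<forall>i>n. v i = 0}"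

definition fscale :: "'a::field \<Rightarrow> (nat \<Rightarrow> 'a) \<Rightarrow> (nat \<Rightarrow> 'a)" where
  "fscale c v = (\<lambda>i. c * v i)"

text \<open>k-dimensional subspaces of F^(n+1), i.e. projective (k-1)-subspaces of PG(n,F).\<close>
definition psubs :: "nat \<Rightarrow> nat \<Rightarrow> (nat \<Rightarrow> 'a::field) set set" where
  "psubs n k = {S. S \<subseteq> pvec n \<and> module.subspace fscale S \<and> vector_space.dim fscale S = k}"

text \<open>Lines of PG(n,F) = 2-dim subspaces, planes = 3-dim subspaces.\<close>
definition fcov :: "'a::field itself \<Rightarrow> nat \<Rightarrow> nat" where
  "fcov _ n = (LEAST m. \<exists>L \<subseteq> (psubs n 2 :: (nat \<Rightarrow> 'a) set set).
       card L = m \<and> (\<forall>P \<in> (psubs n 3 :: (nat \<Rightarrow> 'a) set set). \<exists>l\<in>L. l \<subseteq> P))"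

definition gauss2 :: "nat \<Rightarrow> nat \<Rightarrow> real" where
  "gauss2 n q = ((real q ^ (n+1) - 1) * (real q ^ n - 1)) / ((real q ^ 2 - 1) * (real q - 1))"

definition rho :: "'a::{field,finite} itself \<Rightarrow> nat \<Rightarrow> real" where
  "rho T n = real (fcov T n) / gauss2 n (card (UNIV :: 'a set))"

end

theory Submission
  imports Defs "HOL-Library.FuncSet" "HOL-Library.Cardinality" "HOL-Combinatorics.Transposition"
begin

text \<open>
  Double counting. Let \<open>L\<close> be a smallest set of lines of PG(n+1,q) such that every plane
  contains one of them.
  The lines of \<open>L\<close> inside a hyperplane \<open>H \<cong> PG(n,q)\<close> cover all planes of \<open>H\<close>, so there
  are at least \<open>f(n,q)\<close> of them, while a line lies in only \<open>(q^n - 1)/(q - 1)\<close> of the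
  \<open>(q^(n+2) - 1)/(q - 1)\<close> hyperplanes. Hence \<open>(q^(n+2) - 1) f(n,q) \<le> (q^n - 1) f(n+1,q)\<close>,
  and the Gaussian coefficients satisfy exactly
  \<open>[n+2 choose 2]_q (q^n - 1) = [n+1 choose 2]_q (q^(n+2) - 1)\<close>.
  Hyperplanes are represented as \<open>a\<^sup>\<perp>\<close> for nonzero vectors \<open>a\<close>, which multiplies both
  hyperplane counts by \<open>q - 1\<close>.
\<close>

interpretation fs: vector_space "fscale :: 'a::field \<Rightarrow> (nat \<Rightarrow> 'a) \<Rightarrow> _"
  by unfold_locales (auto simp: fscale_def algebra_simps fun_eq_iff)

lemma subspace_pvec: "fs.subspace (pvec m)"
  by (auto simp: fs.subspace_def pvec_def fscale_def)

lemma zero_in_pvec [simp]: "0 \<in> pvec m"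
  by (simp add: pvec_def)

lemma (in vector_space_pair) dim_image_eq_inj_on:
  assumes "Vector_Spaces.linear s1 s2 f" and "inj_on f (vs1.span S)"
  shows "vs2.dim (f ` S) = vs1.dim S"
proof -
  interpret f: Vector_Spaces.linear s1 s2 f by fact
  obtain B where B: "B \<subseteq> S" "vs1.independent B" "S \<subseteq> vs1.span B" "card B = vs1.dim S"
    using vs1.basis_exists by blast
  have "B \<subseteq> vs1.span S"
    using B(1) vs1.span_superset by blast
  then have "vs1.span B = vs1.span S"
    using B(3) by (simp add: vs1.span_eq)
  then have inj_B: "inj_on f (vs1.span B)"
    using assms(2) by simp
  have "card (f ` B) = vs2.dim (f ` S)"
  proof (rule vs2.basis_card_eq_dim)
    show "f ` B \<subseteq> f ` S" using B(1) by blast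
    show "f ` S \<subseteq> vs2.span (f ` B)" using B(3) by (auto simp: f.span_image)
    show "vs2.independent (f ` B)" using f.independent_injective_image[OF B(2) inj_B] .
  qed
  moreover have "card (f ` B) = card B"
    using card_image[OF inj_on_subset[OF inj_B vs1.span_superset]] .
  ultimately show ?thesis
    using B(4) by simp
qed

interpretation fs_pair: vector_space_pair
  "fscale :: 'a::field \<Rightarrow> (nat \<Rightarrow> 'a) \<Rightarrow> _" "fscale :: 'a \<Rightarrow> (nat \<Rightarrow> 'a) \<Rightarrow> _" ..

lemma finite_pvec: "finite (pvec m :: (nat \<Rightarrow> 'a::{field,finite}) set)"
  and card_pvec: "card (pvec m :: (nat \<Rightarrow> 'a::{field,finite}) set) = CARD('a) ^ Suc m"
proof -
  have bij: "bij_betw (\<lambda>v. restrict v {..m}) (pvec m :: (nat \<Rightarrow> 'a) set) (PiE {..m} (\<lambda>_. UNIV))"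
  proof (rule bij_betw_imageI)
    show "inj_on (\<lambda>v. restrict v {..m}) (pvec m :: (nat \<Rightarrow> 'a) set)"
      by (auto simp: inj_on_def pvec_def fun_eq_iff restrict_def) (metis not_le)
    show "(\<lambda>v. restrict v {..m}) ` (pvec m :: (nat \<Rightarrow> 'a) set) = PiE {..m} (\<lambda>_. UNIV)"
    proof (auto simp: pvec_def split: if_splits)
      fix f :: "nat \<Rightarrow> 'a" assume "f \<in> PiE {..m} (\<lambda>_. UNIV)"
      then show "f \<in> (\<lambda>v. restrict v {..m}) ` {v. \<forall>i>m. v i = 0}"
        by (intro image_eqI[of _ _ "\<lambda>i. if i \<le> m then f i else 0"])
          (auto simp: fun_eq_iff PiE_def extensional_def)
    qed
  qed
  then show "finite (pvec m :: (nat \<Rightarrow> 'a) set)"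
    by (simp add: bij_betw_finite finite_PiE)
  show "card (pvec m :: (nat \<Rightarrow> 'a) set) = CARD('a) ^ Suc m"
    using bij_betw_same_card[OF bij] by (simp add: card_PiE)
qed

lemma finite_psubs: "finite (psubs m k :: (nat \<Rightarrow> 'a::{field,finite}) set set)"
  by (rule finite_subset[of _ "Pow (pvec m)"]) (auto simp: psubs_def finite_pvec)

definition line_cover :: "nat \<Rightarrow> (nat \<Rightarrow> 'a::field) set set \<Rightarrow> bool" where
  "line_cover n L \<longleftrightarrow> L \<subseteq> psubs n 2 \<and> (\<forall>P\<in>psubs n 3. \<exists>l\<in>L. l \<subseteq> P)"

lemma fcov_eq_Least:
  "fcov TYPE('a::field) n = (LEAST k. \<exists>L :: (nat \<Rightarrow> 'a) set set. line_cover n L \<and> card L = k)"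
  unfolding fcov_def line_cover_def by (rule arg_cong[where f = Least], rule ext) blast

lemma fcov_le: "line_cover n L \<Longrightarrow> fcov TYPE('a::field) n \<le> card (L :: (nat \<Rightarrow> 'a) set set)"
  unfolding fcov_eq_Least by (rule Least_le) blast

lemma plane_contains_line:
  assumes "P \<in> psubs m 3"
  shows "\<exists>l\<in>psubs m 2. l \<subseteq> (P :: (nat \<Rightarrow> 'a::field) set)"
proof -
  have P: "P \<subseteq> pvec m" "fs.subspace P" "fs.dim P = 3"
    using assms by (auto simp: psubs_def)
  obtain B where B: "B \<subseteq> P" "fs.independent B" "card B = 3"
    using fs.basis_exists[of P] P(3) by metis
  then obtain b where b: "b \<in> B" "finite B"
    by (metis card.infinite card_3_iff insertI1 zero_neq_numeral)
  define l where "l = fs.span (B - {b})"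
  have "fs.independent (B - {b})"
    using B(2) fs.independent_mono by blast
  moreover have "card (B - {b}) = 2"
    using B(3) b by simp
  ultimately have "fs.dim l = 2"
    by (simp add: l_def fs.dim_eq_card_independent)
  moreover have "l \<subseteq> P"
    unfolding l_def using B(1) P(2) by (meson Diff_subset fs.span_minimal subset_trans)
  ultimately have "l \<in> psubs m 2"
    using P(1) by (auto simp: psubs_def l_def fs.subspace_span)
  with \<open>l \<subseteq> P\<close> show ?thesis by blast
qed

lemma fcov_attained: "\<exists>L :: (nat \<Rightarrow> 'a::field) set set. line_cover n L \<and> card L = fcov TYPE('a) n"
proof -
  have "line_cover n (psubs n 2 :: (nat \<Rightarrow> 'a) set set)"
    using plane_contains_line by (auto simp: line_cover_def)
  then have "\<exists>k. \<exists>L :: (nat \<Rightarrow> 'a) set set. line_cover n L \<and> card L = k"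
    by blast
  then show ?thesis
    unfolding fcov_eq_Least by (rule LeastI_ex)
qed

lemma psubs_linear_image:
  assumes T: "Vector_Spaces.linear fscale fscale T" and inj: "inj_on T (pvec n)"
    and into: "T ` pvec n \<subseteq> pvec N" and S: "S \<in> psubs n k"
  shows "T ` S \<in> psubs N k"
proof -
  interpret T: Vector_Spaces.linear fscale fscale T by (fact T)
  have S': "S \<subseteq> pvec n" "fs.subspace S" "fs.dim S = k"
    using S by (auto simp: psubs_def)
  have "inj_on T (fs.span S)"
    unfolding fs.span_eq_iff[THEN iffD2, OF S'(2)] using inj S'(1) by (rule inj_on_subset)
  then have "fs.dim (T ` S) = k"
    using fs_pair.dim_image_eq_inj_on[OF T] S'(3) by simp
  then show ?thesis
    using S' into T.subspace_image by (auto simp: psubs_def)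
qed

lemma psubs_linear_preimage:
  assumes T: "Vector_Spaces.linear fscale fscale T" and inj: "inj_on T (pvec n)"
    and l: "l \<in> psubs N k" "l \<subseteq> T ` pvec n"
  shows "T -` l \<inter> pvec n \<in> psubs n k"
proof -
  interpret T: Vector_Spaces.linear fscale fscale T by (fact T)
  define S where "S = T -` l \<inter> pvec n"
  have "fs.subspace S"
    unfolding S_def using l(1) T.subspace_vimage fs.subspace_inter subspace_pvec
    by (auto simp: psubs_def)
  moreover have "T ` S = l"
    using l(2) by (auto simp: S_def)
  moreover have "inj_on T (fs.span S)"
    unfolding fs.span_eq_iff[THEN iffD2, OF \<open>fs.subspace S\<close>] using inj
    by (rule inj_on_subset) (simp add: S_def)
  ultimately have "fs.dim S = fs.dim l"
    using fs_pair.dim_image_eq_inj_on[OF T] by metis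
  then have "fs.dim S = k"
    using l(1) by (simp add: psubs_def)
  with \<open>fs.subspace S\<close> show ?thesis
    by (auto simp: psubs_def S_def)
qed

lemma fcov_le_card_lines_in_image:
  fixes T :: "(nat \<Rightarrow> 'a::field) \<Rightarrow> (nat \<Rightarrow> 'a)"
  assumes T: "Vector_Spaces.linear fscale fscale T" and inj: "inj_on T (pvec n)"
    and into: "T ` pvec n \<subseteq> pvec N" and L: "line_cover N L"
  shows "fcov TYPE('a) n \<le> card {l\<in>L. l \<subseteq> T ` pvec n}"
proof -
  define pre where "pre l = T -` l \<inter> pvec n" for l
  let ?L = "{l\<in>L. l \<subseteq> T ` pvec n}"
  have "line_cover n (pre ` ?L)"
    unfolding line_cover_def
  proof
    show "pre ` ?L \<subseteq> psubs n 2"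
      using L psubs_linear_preimage[OF T inj] by (auto simp: line_cover_def pre_def)
    show "\<forall>P\<in>psubs n 3. \<exists>l\<in>pre ` ?L. l \<subseteq> P"
    proof
      fix P :: "(nat \<Rightarrow> 'a) set" assume P: "P \<in> psubs n 3"
      then have "T ` P \<in> psubs N 3"
        by (rule psubs_linear_image[OF T inj into])
      then obtain l where l: "l \<in> L" "l \<subseteq> T ` P"
        using L by (auto simp: line_cover_def)
      moreover have "P \<subseteq> pvec n"
        using P by (simp add: psubs_def)
      ultimately have "l \<in> ?L" and "pre l \<subseteq> P"
        using inj by (auto simp: pre_def inj_on_def)
      then show "\<exists>l\<in>pre ` ?L. l \<subseteq> P" by blast
    qed
  qed
  then have "fcov TYPE('a) n \<le> card (pre ` ?L)"
    by (rule fcov_le)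
  also have "\<dots> = card ?L"
    by (rule card_image, rule inj_on_inverseI[where g = "image T"]) (auto simp: pre_def)
  finally show ?thesis .
qed

definition pdot :: "nat \<Rightarrow> (nat \<Rightarrow> 'a::field) \<Rightarrow> (nat \<Rightarrow> 'a) \<Rightarrow> 'a" where
  "pdot m a v = (\<Sum>t\<le>m. a t * v t)"

definition hyperplane :: "nat \<Rightarrow> (nat \<Rightarrow> 'a::field) \<Rightarrow> (nat \<Rightarrow> 'a) set" where
  "hyperplane m a = {v \<in> pvec m. pdot m a v = 0}"

text \<open>
  Applied to \<open>x \<in> pvec (m - 1)\<close>, whose coordinate \<open>x m\<close> vanishes, the chart swaps that
  coordinate into position \<open>k\<close> and overwrites it with the value putting the result into
  \<open>a\<^sup>\<perp>\<close> (when \<open>a k \<noteq> 0\<close>).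
\<close>
definition hyperplane_chart :: "nat \<Rightarrow> (nat \<Rightarrow> 'a::field) \<Rightarrow> nat \<Rightarrow> (nat \<Rightarrow> 'a) \<Rightarrow> (nat \<Rightarrow> 'a)" where
  "hyperplane_chart m a k x = (\<lambda>t.
    if t = k then - (\<Sum>s\<in>{..m}-{k}. a s * x (transpose k m s)) / a k else x (transpose k m t))"

lemma linear_hyperplane_chart: "Vector_Spaces.linear fscale fscale (hyperplane_chart m a k)"
proof -
  define c where "c x = - (\<Sum>s\<in>{..m}-{k}. a s * x (transpose k m s)) / a k" for x :: "nat \<Rightarrow> 'a"
  have "c (x + y) = c x + c y" for x y
    unfolding c_def by (simp add: sum.distrib distrib_left add_divide_distrib diff_divide_distrib)
  moreover have "c (fscale r x) = r * c x" for r x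
    unfolding c_def fscale_def by (simp add: sum_distrib_left algebra_simps)
  moreover have "hyperplane_chart m a k x = (\<lambda>t. if t = k then c x else x (transpose k m t))" for x
    unfolding hyperplane_chart_def c_def ..
  ultimately show ?thesis
    unfolding Vector_Spaces.linear_iff by (auto simp: fs.vector_space_axioms fscale_def fun_eq_iff)
qed

lemma inj_on_hyperplane_chart: "inj_on (hyperplane_chart (Suc n) a k) (pvec n)"
proof (rule inj_onI, rule ext)
  fix x y s
  assume x: "x \<in> pvec n" and y: "y \<in> pvec n"
    and eq: "hyperplane_chart (Suc n) a k x = hyperplane_chart (Suc n) a k y"
  show "x s = y s"
  proof (cases "s = Suc n")
    case True
    then show ?thesis using x y by (simp add: pvec_def)
  next
    case False
    then have "transpose k (Suc n) s \<noteq> k"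
      by (auto simp: transpose_eq_iff)
    then show ?thesis
      using fun_cong[OF eq, of "transpose k (Suc n) s"] by (simp add: hyperplane_chart_def)
  qed
qed

lemma hyperplane_chart_in_hyperplane:
  assumes "k \<le> Suc n" "a k \<noteq> 0" "x \<in> pvec n"
  shows "hyperplane_chart (Suc n) a k x \<in> hyperplane (Suc n) a"
proof -
  let ?y = "hyperplane_chart (Suc n) a k x"
  have y: "?y \<in> pvec (Suc n)"
    using assms(1,3) by (auto simp: pvec_def hyperplane_chart_def transpose_def)
  let ?S = "\<Sum>s\<in>{..Suc n}-{k}. a s * x (transpose k (Suc n) s)"
  have "pdot (Suc n) a ?y = a k * ?y k + (\<Sum>s\<in>{..Suc n}-{k}. a s * ?y s)"
    unfolding pdot_def by (rule sum.remove) (use assms(1) in auto)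
  also have "(\<Sum>s\<in>{..Suc n}-{k}. a s * ?y s) = ?S"
    by (rule sum.cong) (auto simp: hyperplane_chart_def)
  also have "a k * ?y k = - ?S"
    using assms(2) by (simp add: hyperplane_chart_def)
  finally have "pdot (Suc n) a ?y = 0"
    by simp
  with y show ?thesis
    by (simp add: hyperplane_def)
qed

lemma linear_embedding_into_hyperplane:
  fixes a :: "nat \<Rightarrow> 'a::field"
  assumes a: "a \<in> pvec (Suc n)" "a \<noteq> 0"
  shows "\<exists>T. Vector_Spaces.linear fscale fscale T \<and> inj_on T (pvec n)
    \<and> T ` pvec n \<subseteq> hyperplane (Suc n) a"
proof -
  obtain k where k: "a k \<noteq> 0"
    using a(2) by (auto simp: fun_eq_iff)
  with a(1) have "k \<le> Suc n"
    by (auto simp: pvec_def not_le[symmetric])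
  with k show ?thesis
    using linear_hyperplane_chart inj_on_hyperplane_chart hyperplane_chart_in_hyperplane by blast
qed

lemma fcov_le_card_lines_in_hyperplane:
  fixes a :: "nat \<Rightarrow> 'a::field"
  assumes L: "line_cover (Suc n) L" and a: "a \<in> pvec (Suc n)" "a \<noteq> 0" and "finite L"
  shows "fcov TYPE('a) n \<le> card {l\<in>L. l \<subseteq> hyperplane (Suc n) a}"
proof -
  obtain T where T: "Vector_Spaces.linear fscale fscale T" "inj_on T (pvec n)"
      "T ` pvec n \<subseteq> hyperplane (Suc n) a"
    using linear_embedding_into_hyperplane[OF a] by blast
  then have "T ` pvec n \<subseteq> pvec (Suc n)"
    by (auto simp: hyperplane_def)
  then have "fcov TYPE('a) n \<le> card {l\<in>L. l \<subseteq> T ` pvec n}"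
    using fcov_le_card_lines_in_image T(1,2) L by blast
  also have "\<dots> \<le> card {l\<in>L. l \<subseteq> hyperplane (Suc n) a}"
    using T(3) \<open>finite L\<close> by (intro card_mono) auto
  finally show ?thesis .
qed

lemma homogeneous_2x2_unique_solution:
  fixes x y a b c d :: "'a::field"
  assumes "x * a + y * b = 0" "x * c + y * d = 0" "a * d \<noteq> b * c"
  shows "x = 0 \<and> y = 0"
proof -
  have "x * (a * d - b * c) = d * (x * a + y * b) - b * (x * c + y * d)"
    "y * (a * d - b * c) = a * (x * c + y * d) - c * (x * a + y * b)"
    by (simp_all add: algebra_simps)
  then have "x * (a * d - b * c) = 0" "y * (a * d - b * c) = 0"
    by (simp_all only: assms(1,2) mult_zero_right diff_self)
  with assms(3) show ?thesis
    by simp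
qed

lemma independent_pair_nonzero_minor:
  assumes "fs.independent {u, v}" "u \<noteq> v"
  shows "\<exists>i j. u i * v j \<noteq> u j * v i"
proof (rule ccontr)
  assume "\<not> ?thesis"
  then have minor: "u i * v j = u j * v i" for i j
    by blast
  have "u \<noteq> 0"
    using assms(1) fs.dependent_zero by blast
  then obtain i where "u i \<noteq> 0"
    by (auto simp: fun_eq_iff)
  then have "v = fscale (v i / u i) u"
    using minor by (auto simp: fscale_def fun_eq_iff field_simps)
  then have "v \<in> fs.span {u}"
    by (metis fs.span_base fs.span_scale singletonI)
  moreover have "fs.independent (insert v {u})"
    using assms(1) by (simp add: insert_commute)
  ultimately show False
    using assms(2) by (simp add: fs.independent_insert)
qed

lemma card_common_zeros_le:
  fixes u v :: "nat \<Rightarrow> 'a::{field,finite}"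
  assumes minor: "u i * v j \<noteq> u j * v i" and "i \<le> m" "j \<le> m"
  shows "card {a \<in> pvec m. pdot m a u = 0 \<and> pdot m a v = 0} \<le> CARD('a) ^ (m - 1)"
proof -
  define S where "S = {a \<in> pvec m. pdot m a u = 0 \<and> pdot m a v = 0}"
  define D where "D = {..m} - {i, j}"
  have "i \<noteq> j"
    using minor by auto
  then have card_D: "card D = m - 1"
    using assms by (simp add: D_def card_Diff_subset)
  \<comment> \<open>Two elements of \<open>S\<close> that agree off \<open>{i, j}\<close> differ by a solution of a homogeneous
    \<open>2 \<times> 2\<close> system whose determinant is the nonzero minor.\<close>
  have "inj_on (\<lambda>a. restrict a D) S"
  proof (rule inj_onI)
    fix a b assume a: "a \<in> S" and b: "b \<in> S" and eq: "restrict a D = restrict b D"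
    define d where "d = a - b"
    have d_outside: "d t = 0" if "t \<notin> {i, j}" for t
    proof (cases "t \<le> m")
      case True
      then show ?thesis
        using that fun_cong[OF eq, of t] by (simp add: D_def d_def)
    next
      case False
      then show ?thesis
        using a b by (simp add: S_def pvec_def d_def)
    qed
    have pdot_d: "pdot m d w = 0" if "pdot m a w = 0" "pdot m b w = 0" for w
      using that by (simp add: pdot_def d_def algebra_simps sum_subtractf)
    have "pdot m d w = d i * w i + d j * w j" for w
    proof -
      have "pdot m d w = (\<Sum>t\<in>{i, j}. d t * w t)"
        unfolding pdot_def using assms(2,3) d_outside by (intro sum.mono_neutral_right) auto
      then show ?thesis
        using \<open>i \<noteq> j\<close> by simp
    qed
    then have "d i * u i + d j * u j = 0" "d i * v i + d j * v j = 0"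
      using pdot_d a b by (auto simp: S_def)
    then have "d i = 0 \<and> d j = 0"
      using minor by (rule homogeneous_2x2_unique_solution)
    then have "d t = 0" for t
      using d_outside by (cases "t \<in> {i, j}") auto
    then show "a = b"
      by (simp add: d_def fun_eq_iff)
  qed
  then have "card S = card ((\<lambda>a. restrict a D) ` S)"
    by (simp add: card_image)
  also have "\<dots> \<le> card (PiE D (\<lambda>_. UNIV :: 'a set))"
    by (rule card_mono) (auto simp: finite_PiE D_def split: if_splits)
  also have "\<dots> = CARD('a) ^ (m - 1)"
    using card_PiE[of D "\<lambda>_. UNIV :: 'a set"] card_D by (simp add: D_def)
  finally show ?thesis
    by (simp add: S_def)
qed

lemma card_hyperplanes_through_line_le:
  fixes l :: "(nat \<Rightarrow> 'a::{field,finite}) set"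
  assumes "l \<in> psubs m 2"
  shows "card {a \<in> pvec m - {0}. l \<subseteq> hyperplane m a} \<le> CARD('a) ^ (m - 1) - 1"
proof -
  have l: "l \<subseteq> pvec m" "fs.dim l = 2"
    using assms by (auto simp: psubs_def)
  obtain B where B: "B \<subseteq> l" "fs.independent B" "card B = 2"
    using fs.basis_exists[of l] l(2) by metis
  then obtain u v where uv: "B = {u, v}" "u \<noteq> v"
    by (metis card_2_iff)
  then obtain i j where minor: "u i * v j \<noteq> u j * v i"
    using B(2) independent_pair_nonzero_minor by blast
  have "u \<in> pvec m" "v \<in> pvec m"
    using B(1) l(1) uv(1) by auto
  have "i \<le> m \<and> j \<le> m"
  proof (rule ccontr)
    assume "\<not> ?thesis"
    then have "u i = 0 \<and> v i = 0 \<or> u j = 0 \<and> v j = 0"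
      using \<open>u \<in> pvec m\<close> \<open>v \<in> pvec m\<close> by (auto simp: pvec_def)
    with minor show False
      by auto
  qed
  define Z where "Z = {a \<in> pvec m. pdot m a u = 0 \<and> pdot m a v = 0}"
  have "finite Z" "0 \<in> Z"
    by (simp_all add: Z_def finite_pvec pdot_def)
  have "{a \<in> pvec m - {0}. l \<subseteq> hyperplane m a} \<subseteq> Z - {0}"
    using B(1) uv(1) by (auto simp: hyperplane_def Z_def)
  then have "card {a \<in> pvec m - {0}. l \<subseteq> hyperplane m a} \<le> card (Z - {0})"
    by (rule card_mono[rotated]) (simp add: \<open>finite Z\<close>)
  also have "\<dots> = card Z - 1"
    using \<open>0 \<in> Z\<close> \<open>finite Z\<close> by simp
  also have "\<dots> \<le> CARD('a) ^ (m - 1) - 1"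
    using card_common_zeros_le[OF minor] \<open>i \<le> m \<and> j \<le> m\<close> unfolding Z_def
    by (blast intro: diff_le_mono)
  finally show ?thesis .
qed

lemma fcov_Suc_bound:
  "(CARD('a::{field,finite}) ^ (n + 2) - 1) * fcov TYPE('a) n
    \<le> fcov TYPE('a) (Suc n) * (CARD('a) ^ n - 1)"
proof -
  let ?H = "hyperplane (Suc n) :: (nat \<Rightarrow> 'a) \<Rightarrow> _"
  obtain L :: "(nat \<Rightarrow> 'a) set set" where L: "line_cover (Suc n) L" "card L = fcov TYPE('a) (Suc n)"
    using fcov_attained by blast
  define A where "A = (pvec (Suc n) :: (nat \<Rightarrow> 'a) set) - {0}"
  have "finite A" and card_A: "card A = CARD('a) ^ (n + 2) - 1"
    by (simp_all add: A_def finite_pvec card_pvec)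
  have "finite L"
    using L(1) finite_psubs by (auto simp: line_cover_def intro: finite_subset)
  have upper: "card {a\<in>A. l \<subseteq> ?H a} \<le> CARD('a) ^ n - 1" if "l \<in> L" for l
  proof -
    have "l \<in> psubs (Suc n) 2"
      using L(1) that by (auto simp: line_cover_def)
    from card_hyperplanes_through_line_le[OF this] show ?thesis
      by (simp add: A_def)
  qed
  have "card A * fcov TYPE('a) n = (\<Sum>a\<in>A. fcov TYPE('a) n)"
    by simp
  also have "\<dots> \<le> (\<Sum>a\<in>A. card {l\<in>L. l \<subseteq> ?H a})"
    by (intro sum_mono fcov_le_card_lines_in_hyperplane[OF L(1) _ _ \<open>finite L\<close>])
      (auto simp: A_def)
  also have "\<dots> = (\<Sum>l\<in>L. card {a\<in>A. l \<subseteq> ?H a})"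
    unfolding card_eq_sum by (rule sum.swap_restrict[OF \<open>finite A\<close> \<open>finite L\<close>])
  also have "\<dots> \<le> card L * (CARD('a) ^ n - 1)"
    using sum_mono[OF upper] by simp
  finally show ?thesis
    using card_A L(2) by simp
qed

lemma card_field_ge_2: "2 \<le> CARD('a::{field,finite})"
  using card_mono[of UNIV "{0, 1 :: 'a}"] by simp

lemma gauss2_pos:
  assumes "2 \<le> q" "1 \<le> n"
  shows "0 < gauss2 n q"
proof -
  have power_gt_1: "1 < real q ^ k" if "1 \<le> k" for k
    using assms(1) that by (intro one_less_power) auto
  have "1 < real q ^ (n + 1)" "1 < real q ^ n" "1 < real q ^ 2" "1 < real q ^ 1"
    by (rule power_gt_1, use assms(2) in simp)+
  then show ?thesis
    unfolding gauss2_def power_one_right by (intro divide_pos_pos mult_pos_pos; linarith)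
qed

lemma gauss2_Suc: "gauss2 (Suc n) q * (real q ^ n - 1) = gauss2 n q * (real q ^ (n + 2) - 1)"
  by (simp add: gauss2_def)

lemma divide_gauss2_le_divide_gauss2_Suc:
  fixes x y :: real
  assumes q: "2 \<le> q" and n: "1 \<le> n" and bound: "(real q ^ (n + 2) - 1) * x \<le> y * (real q ^ n - 1)"
  shows "x / gauss2 n q \<le> y / gauss2 (Suc n) q"
proof -
  have g0: "0 < gauss2 n q" and g1: "0 < gauss2 (Suc n) q"
    using gauss2_pos q n by auto
  have "1 < real q ^ n"
    using q n by (simp add: one_less_power)
  have "x * gauss2 (Suc n) q * (real q ^ n - 1) = (real q ^ (n + 2) - 1) * x * gauss2 n q"
    using gauss2_Suc[of n q] by (simp only: mult_ac)
  also have "\<dots> \<le> y * gauss2 n q * (real q ^ n - 1)"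
    using mult_right_mono[OF bound less_imp_le[OF g0]] by (simp only: mult_ac)
  finally have "x * gauss2 (Suc n) q \<le> y * gauss2 n q"
    using \<open>1 < real q ^ n\<close> by (simp add: mult_right_le_imp_le)
  then show ?thesis
    using g0 g1 by (simp add: divide_simps)
qed

theorem lemma4p6:
  fixes n :: nat
  assumes "n \<ge> 1"
  shows "rho TYPE('a::{field,finite}) n \<le> rho TYPE('a) (Suc n)"
proof -
  define q where "q = CARD('a)"
  have "2 \<le> q"
    using card_field_ge_2 by (simp add: q_def)
  have "real ((q ^ (n + 2) - 1) * fcov TYPE('a) n) \<le> real (fcov TYPE('a) (Suc n) * (q ^ n - 1))"
    unfolding q_def by (rule of_nat_mono) (rule fcov_Suc_bound)
  then have "(real q ^ (n + 2) - 1) * fcov TYPE('a) n \<le> fcov TYPE('a) (Suc n) * (real q ^ n - 1)"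
    using \<open>2 \<le> q\<close> by (simp add: of_nat_diff)
  then show ?thesis
    unfolding rho_def q_def[symmetric] using \<open>2 \<le> q\<close> assms
    by (rule divide_gauss2_le_divide_gauss2_Suc[rotated 2])
qed

end
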